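(* If $G$ is a $4$-regular graph, then $\mathrm{TC}_2(G)=4$.
   Context: All graphs are finite, simple and connected. $N(v)$ denotes the open neighborhood of $v$. A set $S\subseteq V(G)$ is a total $2$-dominating set if $|N(v)\cap S|\ge 2$ for every $v\in V(G)$. Two disjoint sets $U,W\subseteq V(G)$ form a total $2$-coalition if neither is a total $2$-dominating set but $U\cup W$ is. A total $2$-coalition partition of $G$ is a partition $\Omega$ of $V(G)$ in which every set forms a total $2$-coalition with some other set of $\Omega$; $\mathrm{TC}_2(G)$ is the maximum cardinality of such a partition. *)

theory Defs
  imports Main
begin

definition simple_graph :: "'a set \<Rightarrow> ('a \<Rightarrow> 'a \<Rightarrow> bool) \<Rightarrow> bool" where
  "simple_graph V E \<longleftrightarrow> finite V \<and> V \<noteq> {}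
     \<and> (\<forall>u v. E u v \<longrightarrow> u \<in> V \<and> v \<in> V)
     \<and> (\<forall>u v. E u v \<longrightarrow> E v u)
     \<and> (\<forall>v. \<not> E v v)"

definition connected_graph :: "'a set \<Rightarrow> ('a \<Rightarrow> 'a \<Rightarrow> bool) \<Rightarrow> bool" where
  "connected_graph V E \<longleftrightarrow> simple_graph V E \<and> (\<forall>u\<in>V. \<forall>v\<in>V. E\<^sup>*\<^sup>* u v)"

definition nbhd :: "'a set \<Rightarrow> ('a \<Rightarrow> 'a \<Rightarrow> bool) \<Rightarrow> 'a \<Rightarrow> 'a set" where
  "nbhd V E v = {u \<in> V. E v u}"

definition regular :: "'a set \<Rightarrow> ('a \<Rightarrow> 'a \<Rightarrow> bool) \<Rightarrow> nat \<Rightarrow> bool" where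
  "regular V E k \<longleftrightarrow> (\<forall>v\<in>V. card (nbhd V E v) = k)"

definition total_2_dom :: "'a set \<Rightarrow> ('a \<Rightarrow> 'a \<Rightarrow> bool) \<Rightarrow> 'a set \<Rightarrow> bool" where
  "total_2_dom V E S \<longleftrightarrow> S \<subseteq> V \<and> (\<forall>v\<in>V. card (nbhd V E v \<inter> S) \<ge> 2)"

definition total_2_coalition :: "'a set \<Rightarrow> ('a \<Rightarrow> 'a \<Rightarrow> bool) \<Rightarrow> 'a set \<Rightarrow> 'a set \<Rightarrow> bool" where
  "total_2_coalition V E U W \<longleftrightarrow> U \<inter> W = {}
     \<and> \<not> total_2_dom V E U \<and> \<not> total_2_dom V E W \<and> total_2_dom V E (U \<union> W)"

definition is_partition :: "'a set \<Rightarrow> 'a set set \<Rightarrow> bool" where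
  "is_partition V P \<longleftrightarrow> \<Union>P = V \<and> {} \<notin> P
     \<and> (\<forall>A\<in>P. \<forall>B\<in>P. A \<noteq> B \<longrightarrow> A \<inter> B = {})"

definition tc2_partition :: "'a set \<Rightarrow> ('a \<Rightarrow> 'a \<Rightarrow> bool) \<Rightarrow> 'a set set \<Rightarrow> bool" where
  "tc2_partition V E P \<longleftrightarrow> is_partition V P
     \<and> (\<forall>A\<in>P. \<exists>B\<in>P. B \<noteq> A \<and> total_2_coalition V E A B)"

definition TC2 :: "'a set \<Rightarrow> ('a \<Rightarrow> 'a \<Rightarrow> bool) \<Rightarrow> nat" where
  "TC2 V E = Max {card P | P. tc2_partition V E P}"

end

(*
  In a 4-regular graph the classes of a partition share the four neighbours of each vertex,
  while a total 2-coalition pair must own at least two of them. So two disjoint coalition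
  pairs own all four neighbours of every vertex; a fifth class then owns no neighbours at all and
  its partner would have to be total 2-dominating by itself. Hence with five or more classes
  any two coalition pairs meet, and the coalition graph has a class H in coalition with all
  others. At a vertex with m <= 1 neighbours in H, each of the at least four other classes
  needs 2 - m of its neighbours, so the vertex has at least m + 4 (2 - m) >= 5 of them.
  Conversely, for three neighbours b, c, d of a vertex v, the class V - {b, c, d} misses all
  but one neighbour of v, yet together with any one of {b}, {c}, {d} it omits only two
  vertices and is total 2-dominating; this gives a partition into four classes.
*)

theory Submission
  imports Defs
begin

lemma intersecting_edges_imp_universal_vertex:
  assumes "P \<noteq> {}"
    and sym: "\<And>A B. R A B \<Longrightarrow> R B A"
    and partner: "\<And>A. A \<in> P \<Longrightarrow> \<exists>B\<in>P. B \<noteq> A \<and> R A B"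
    and intersect: "\<And>A B C D. A \<in> P \<Longrightarrow> B \<in> P \<Longrightarrow> C \<in> P \<Longrightarrow> D \<in> P \<Longrightarrow>
      R A B \<Longrightarrow> R C D \<Longrightarrow> {A, B} \<inter> {C, D} \<noteq> {}"
  obtains H where "H \<in> P" "\<And>C. C \<in> P \<Longrightarrow> C \<noteq> H \<Longrightarrow> R H C"
proof -
  obtain A where A: "A \<in> P" using \<open>P \<noteq> {}\<close> by blast
  then obtain B where B: "B \<in> P" "B \<noteq> A" "R A B" using partner by blast
  have to_A_or_B: "R A C \<or> R B C" if C: "C \<in> P" "C \<notin> {A, B}" for C
  proof -
    obtain D where "D \<in> P" "R C D" using partner[OF C(1)] by blast
    then have "D = A \<or> D = B" using intersect[OF A B(1) C(1)] B(3) C(2) by blast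
    then show ?thesis using sym \<open>D \<in> P\<close> \<open>R C D\<close> A B(1) C(1) by blast
  qed
  show thesis
  proof (cases "\<forall>C\<in>P - {A, B}. R A C")
    case True
    then show thesis using that[OF A] B by blast
  next
    case False
    then obtain C where C: "C \<in> P" "C \<notin> {A, B}" "\<not> R A C" by blast
    then have "R B C" using to_A_or_B by blast
    have "R B C'" if C': "C' \<in> P" "C' \<noteq> B" for C'
    proof -
      consider "C' = A" | "C' = C" | "C' \<notin> {A, B, C}" using C' by blast
      then show ?thesis
      proof cases
        case 3
        then have "\<not> R A C'" using intersect[OF A C'(1) B(1) C(1)] \<open>R B C\<close> B(2) C(2) by blast
        then show ?thesis using to_A_or_B C' 3 by blast
      qed (use sym B \<open>R B C\<close> in blast)+
    qed
    then show thesis using that[OF B(1)] by blast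
  qed
qed

lemma finite_nbhd: "simple_graph V E \<Longrightarrow> finite (nbhd V E v)"
  unfolding simple_graph_def nbhd_def by auto

lemma is_partitionD:
  assumes "is_partition V P"
  shows "\<Union>P = V" "{} \<notin> P" "\<And>A B. A \<in> P \<Longrightarrow> B \<in> P \<Longrightarrow> A \<noteq> B \<Longrightarrow> A \<inter> B = {}"
  using assms unfolding is_partition_def by auto

lemma tc2_partitionD:
  assumes "tc2_partition V E P"
  shows "is_partition V P" "\<And>A. A \<in> P \<Longrightarrow> \<exists>B\<in>P. B \<noteq> A \<and> total_2_coalition V E A B"
  using assms unfolding tc2_partition_def by auto

lemma finite_partition: "simple_graph V E \<Longrightarrow> is_partition V P \<Longrightarrow> finite P"
  using finite_UnionD is_partitionD(1) unfolding simple_graph_def by metis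

lemma sum_card_nbhd_Int_partition:
  assumes "simple_graph V E" and part: "is_partition V P"
  shows "(\<Sum>X\<in>P. card (nbhd V E v \<inter> X)) = card (nbhd V E v)"
proof -
  have "nbhd V E v = (\<Union>X\<in>P. nbhd V E v \<inter> X)"
    using is_partitionD(1)[OF part] unfolding nbhd_def by blast
  moreover have "card (\<Union>X\<in>P. nbhd V E v \<inter> X) = (\<Sum>X\<in>P. card (nbhd V E v \<inter> X))"
  proof (rule card_UN_disjoint)
    show "finite P" using finite_partition[OF assms] .
    show "\<forall>X\<in>P. finite (nbhd V E v \<inter> X)" using finite_nbhd[OF assms(1)] by blast
    show "\<forall>X\<in>P. \<forall>Y\<in>P. X \<noteq> Y \<longrightarrow> nbhd V E v \<inter> X \<inter> (nbhd V E v \<inter> Y) = {}"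
      using is_partitionD(3)[OF part] by blast
  qed
  ultimately show ?thesis by simp
qed

lemma total_2_coalition_sym: "total_2_coalition V E X Y \<Longrightarrow> total_2_coalition V E Y X"
  unfolding total_2_coalition_def by (simp add: Int_commute Un_commute)

lemma total_2_coalition_card_nbhd:
  assumes "simple_graph V E" "total_2_coalition V E X Y" "v \<in> V"
  shows "2 \<le> card (nbhd V E v \<inter> X) + card (nbhd V E v \<inter> Y)"
proof -
  have "nbhd V E v \<inter> (X \<union> Y) = (nbhd V E v \<inter> X) \<union> (nbhd V E v \<inter> Y)" by blast
  moreover have "X \<inter> Y = {}" "2 \<le> card (nbhd V E v \<inter> (X \<union> Y))"
    using assms(2,3) unfolding total_2_coalition_def total_2_dom_def by auto
  ultimately show ?thesis
    using finite_nbhd[OF assms(1)] by (simp add: card_Un_disjoint disjoint_iff)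
qed

lemma not_total_2_domE:
  assumes "X \<subseteq> V" "\<not> total_2_dom V E X"
  obtains v where "v \<in> V" "card (nbhd V E v \<inter> X) \<le> 1"
  using assms unfolding total_2_dom_def by force

context
  fixes V :: "'a set" and E :: "'a \<Rightarrow> 'a \<Rightarrow> bool" and P :: "'a set set"
  assumes simple: "simple_graph V E" and reg4: "regular V E 4" and tc2: "tc2_partition V E P"
begin

lemma tc2_partition_disjoint_coalitions_cover:
  assumes P: "A \<in> P" "B \<in> P" "C \<in> P" "D \<in> P"
    and AB: "total_2_coalition V E A B" and CD: "total_2_coalition V E C D"
    and disj: "{A, B} \<inter> {C, D} = {}"
  shows "P = {A, B, C, D}"
proof (rule ccontr)
  let ?c = "\<lambda>v X. card (nbhd V E v \<inter> X)"
  note part = tc2_partitionD(1)[OF tc2]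
  assume "P \<noteq> {A, B, C, D}"
  then obtain X where X: "X \<in> P" "X \<notin> {A, B, C, D}" using P by blast
  then obtain Y where Y: "Y \<in> P" "total_2_coalition V E X Y"
    using tc2_partitionD(2)[OF tc2] by blast
  have "A \<inter> B = {}" "C \<inter> D = {}"
    using AB CD unfolding total_2_coalition_def by simp_all
  then have "A \<noteq> B" "C \<noteq> D"
    using is_partitionD(2)[OF part] P by auto
  then have distinct: "A \<notin> {B, C, D, X}" "B \<notin> {C, D, X}" "C \<notin> {D, X}" "D \<noteq> X"
    using disj X(2) by auto
  have "2 \<le> ?c v Y" if v: "v \<in> V" for v
  proof -
    have "(\<Sum>Z\<in>{A, B, C, D, X}. ?c v Z) \<le> (\<Sum>Z\<in>P. ?c v Z)"
      by (rule sum_mono2[OF finite_partition[OF simple part]]) (use P X(1) in auto)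
    also have "\<dots> = 4"
      using sum_card_nbhd_Int_partition[OF simple part] reg4 v unfolding regular_def by simp
    finally have "?c v A + ?c v B + ?c v C + ?c v D + ?c v X \<le> 4"
      using distinct by (simp add: add.assoc)
    moreover have "2 \<le> ?c v A + ?c v B" "2 \<le> ?c v C + ?c v D" "2 \<le> ?c v X + ?c v Y"
      using total_2_coalition_card_nbhd[OF simple AB v] total_2_coalition_card_nbhd[OF simple CD v]
        total_2_coalition_card_nbhd[OF simple Y(2) v] by simp_all
    ultimately show ?thesis by linarith
  qed
  moreover have "Y \<subseteq> V" using is_partitionD(1)[OF part] Y(1) by blast
  ultimately have "total_2_dom V E Y"
    unfolding total_2_dom_def by blast
  then show False using Y(2) unfolding total_2_coalition_def by blast
qed

lemma card_tc2_partition_le_4: "card P \<le> 4"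
proof (rule ccontr)
  let ?c = "\<lambda>v X. card (nbhd V E v \<inter> X)"
  assume "\<not> card P \<le> 4"
  note part = tc2_partitionD(1)[OF tc2] and partner = tc2_partitionD(2)[OF tc2]
  have intersect: "{A, B} \<inter> {C, D} \<noteq> {}"
    if "A \<in> P" "B \<in> P" "C \<in> P" "D \<in> P"
      "total_2_coalition V E A B" "total_2_coalition V E C D" for A B C D
  proof
    assume "{A, B} \<inter> {C, D} = {}"
    then have "P = {A, B, C, D}" by (rule tc2_partition_disjoint_coalitions_cover[OF that])
    moreover have "card {A, B, C, D} \<le> 4" by (simp add: card_insert_if)
    ultimately show False using \<open>\<not> card P \<le> 4\<close> by simp
  qed
  have "P \<noteq> {}" using \<open>\<not> card P \<le> 4\<close> by auto
  then obtain H where H: "H \<in> P" and hub: "\<And>C. C \<in> P \<Longrightarrow> C \<noteq> H \<Longrightarrow> total_2_coalition V E H C"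
  proof (rule intersecting_edges_imp_universal_vertex[where R = "total_2_coalition V E"])
  qed (assumption | rule that total_2_coalition_sym partner intersect)+
  have "H \<subseteq> V" using is_partitionD(1)[OF part] H by blast
  moreover have "\<not> total_2_dom V E H"
    using partner[OF H] unfolding total_2_coalition_def by blast
  ultimately obtain v where v: "v \<in> V" and cH: "?c v H \<le> 1"
    by (rule not_total_2_domE)
  have bound: "of_nat (card (P - {H})) * (2 - ?c v H) \<le> (\<Sum>C\<in>P - {H}. ?c v C)"
    by (rule sum_bounded_below) (use total_2_coalition_card_nbhd[OF simple hub v] in force)
  have total: "?c v H + (\<Sum>C\<in>P - {H}. ?c v C) = 4"
    using sum.remove[OF finite_partition[OF simple part] H, of "?c v"]
      sum_card_nbhd_Int_partition[OF simple part, of v] reg4 v unfolding regular_def by simp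
  have "4 \<le> card (P - {H})"
    using H \<open>\<not> card P \<le> 4\<close> finite_partition[OF simple part] by (simp add: card_Diff_singleton)
  then have "4 * (2 - ?c v H) \<le> card (P - {H}) * (2 - ?c v H)" by (rule mult_le_mono1)
  also have "\<dots> \<le> (\<Sum>C\<in>P - {H}. ?c v C)" using bound by simp
  finally show False using total cH by linarith
qed

end

lemma total_2_dom_Diff:
  assumes "regular V E k" "finite S" "card S + 2 \<le> k"
  shows "total_2_dom V E (V - S)"
  unfolding total_2_dom_def
proof (intro conjI ballI)
  fix w assume "w \<in> V"
  then have "card (nbhd V E w) = k" using assms(1) unfolding regular_def by blast
  moreover have "card (nbhd V E w) - card S \<le> card (nbhd V E w - S)"
    using assms(2) by (rule diff_card_le_card_Diff)
  moreover have "nbhd V E w \<inter> (V - S) = nbhd V E w - S" unfolding nbhd_def by blast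
  ultimately show "2 \<le> card (nbhd V E w \<inter> (V - S))" using assms(3) by simp
qed simp

lemma not_total_2_dom_singleton:
  assumes "V \<noteq> {}"
  shows "\<not> total_2_dom V E {x}"
proof
  assume dom: "total_2_dom V E {x}"
  obtain v where "v \<in> V" using assms by blast
  then have "2 \<le> card (nbhd V E v \<inter> {x})" using dom unfolding total_2_dom_def by blast
  moreover have "card (nbhd V E v \<inter> {x}) \<le> card {x}" by (rule card_mono) auto
  ultimately show False by simp
qed

lemma tc2_partition_insert_singletons:
  assumes "S \<subseteq> V" "S \<noteq> {}" "V - S \<noteq> {}"
    and rest: "\<not> total_2_dom V E (V - S)"
    and singleton: "\<And>x. x \<in> S \<Longrightarrow> \<not> total_2_dom V E {x}"
    and insert: "\<And>x. x \<in> S \<Longrightarrow> total_2_dom V E (insert x (V - S))"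
  shows "tc2_partition V E (insert (V - S) ((\<lambda>x. {x}) ` S))"
  unfolding tc2_partition_def is_partition_def
proof (intro conjI ballI)
  have coalition: "total_2_coalition V E (V - S) {x}" "{x} \<noteq> V - S" if "x \<in> S" for x
    unfolding total_2_coalition_def using that rest singleton[OF that] insert[OF that] by auto
  fix X assume "X \<in> insert (V - S) ((\<lambda>x. {x}) ` S)"
  then show "\<exists>Y\<in>insert (V - S) ((\<lambda>x. {x}) ` S). Y \<noteq> X \<and> total_2_coalition V E X Y"
  proof
    assume "X = V - S"
    moreover obtain x where "x \<in> S" using \<open>S \<noteq> {}\<close> by blast
    ultimately show ?thesis using coalition[OF \<open>x \<in> S\<close>] by blast
  next
    assume "X \<in> (\<lambda>x. {x}) ` S"
    then obtain x where "x \<in> S" "X = {x}" by blast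
    then show ?thesis using coalition[OF \<open>x \<in> S\<close>] total_2_coalition_sym by blast
  qed
qed (use assms(1,3) in auto)

lemma obtain_tc2_partition_card_4:
  assumes simple: "simple_graph V E" and reg4: "regular V E 4"
  obtains P where "tc2_partition V E P" "card P = 4"
proof -
  obtain v where v: "v \<in> V" using simple unfolding simple_graph_def by blast
  then have "card (nbhd V E v) = 4" using reg4 unfolding regular_def by blast
  then have "3 \<le> card (nbhd V E v)" by simp
  then obtain S where S: "S \<subseteq> nbhd V E v" "card S = 3" "finite S"
    by (rule obtain_subset_with_card_n)
  have "S \<subseteq> V" using S(1) unfolding nbhd_def by blast
  have "v \<in> V - S" using S(1) v simple unfolding nbhd_def simple_graph_def by blast
  have rest: "\<not> total_2_dom V E (V - S)"
  proof
    assume "total_2_dom V E (V - S)"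
    then have "2 \<le> card (nbhd V E v \<inter> (V - S))" using v unfolding total_2_dom_def by blast
    also have "nbhd V E v \<inter> (V - S) = nbhd V E v - S" unfolding nbhd_def by blast
    also have "card (nbhd V E v - S) = 1"
      using card_Diff_subset[OF S(3,1)] \<open>card (nbhd V E v) = 4\<close> S(2) by simp
    finally show False by simp
  qed
  have insert: "total_2_dom V E (insert x (V - S))" if "x \<in> S" for x
  proof -
    have "insert x (V - S) = V - (S - {x})" using that \<open>S \<subseteq> V\<close> by blast
    moreover have "card (S - {x}) + 2 \<le> 4" using that S(2,3) by simp
    ultimately show ?thesis using total_2_dom_Diff[OF reg4] S(3) by simp
  qed
  have singleton: "\<not> total_2_dom V E {x}" for x
    using v by (intro not_total_2_dom_singleton) blast
  have "S \<noteq> {}" "V - S \<noteq> {}" using S(2) \<open>v \<in> V - S\<close> by auto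
  then have "tc2_partition V E (insert (V - S) ((\<lambda>x. {x}) ` S))"
    using tc2_partition_insert_singletons[OF \<open>S \<subseteq> V\<close> _ _ rest singleton insert] by blast
  moreover have "card (insert (V - S) ((\<lambda>x. {x}) ` S)) = 4"
  proof -
    have "V - S \<notin> (\<lambda>x. {x}) ` S" by blast
    then show ?thesis using S(2,3) by (simp add: card_image)
  qed
  ultimately show thesis by (rule that)
qed

lemma TC2_eqI:
  assumes "\<And>P. tc2_partition V E P \<Longrightarrow> card P \<le> k" "tc2_partition V E P" "card P = k"
  shows "TC2 V E = k"
  unfolding TC2_def
proof (rule Max_eqI)
  show "finite {card P | P. tc2_partition V E P}"
    using assms(1) unfolding finite_nat_set_iff_bounded_le by blast
  show "\<And>n. n \<in> {card P | P. tc2_partition V E P} \<Longrightarrow> n \<le> k" using assms(1) by blast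
  show "k \<in> {card P | P. tc2_partition V E P}" using assms(2,3) by blast
qed

theorem proposition3p8:
  fixes V :: "'a set" and E :: "'a \<Rightarrow> 'a \<Rightarrow> bool"
  assumes "connected_graph V E" and "regular V E 4"
  shows "TC2 V E = 4"
proof -
  have simple: "simple_graph V E" using assms(1) unfolding connected_graph_def by blast
  obtain P where "tc2_partition V E P" "card P = 4"
    using obtain_tc2_partition_card_4[OF simple assms(2)] .
  then show ?thesis
    using card_tc2_partition_le_4[OF simple assms(2)] by (intro TC2_eqI)
qed

end
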